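(* Let $c$ be a positive integer and let $\nu$ be the smallest positive integer that does not divide $c$. There exists $N(c)$ such that for every integer $n>N(c)$, $\mathrm{mup}(n+\nu,c)=\mathrm{mup}(n,c)+1$.
   Context: A unique partition of positive integers $A$ and $B$ consists of positive integers $A_1,\dots,A_a$ with $\sum_i A_i=A$ and $B_1,\dots,B_b$ with $\sum_j B_j=B$ such that, viewing these as $a+b$ indexed items, the only subsets of the items whose sum equals $A$ are the set of items $\{A_1,\dots,A_a\}$ and, in case $A=B$, also its complement. $\mathrm{mup}(A,B)$ is the maximum of $a+b$ over all unique partitions of $A$ and $B$ (with $\mathrm{mup}(1,1)=2$). *)

theory Defs
  imports Main
begin

text \<open>A unique partition of A and B: lists xs (parts of A) and ys (parts of B) of positive
integers; the a+b items are the entries of xs @ ys indexed by positions; the only index sets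
whose item-sum equals A are the positions of xs and, if A = B, also the complementary positions.\<close>

definition unique_partition :: "nat \<Rightarrow> nat \<Rightarrow> nat list \<Rightarrow> nat list \<Rightarrow> bool" where
  "unique_partition A B xs ys \<longleftrightarrow>
     (\<forall>x\<in>set xs. 0 < x) \<and> (\<forall>y\<in>set ys. 0 < y) \<and>
     sum_list xs = A \<and> sum_list ys = B \<and>
     (\<forall>S \<subseteq> {..<length xs + length ys}.
        (\<Sum>i\<in>S. (xs @ ys) ! i) = A \<longleftrightarrow>
        (S = {..<length xs} \<or> (A = B \<and> S = {length xs..<length xs + length ys})))"

definition mup :: "nat \<Rightarrow> nat \<Rightarrow> nat" where
  "mup A B = Max {length xs + length ys | xs ys. unique_partition A B xs ys}"

end

theory Submission
  imports Defs "HOL-Library.Multiset"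
begin

text \<open>
  Let \<open>v\<close> be the least non-divisor of \<open>c\<close> and \<open>n\<close> large. For \<open>n \<noteq> c\<close> whether a partition is
  unique only depends on the multisets of parts: it is unique iff no choice of parts that involves a
  part of \<open>n\<close> sums to \<open>c\<close>. One big part together with about \<open>n / v\<close> parts equal to \<open>v\<close>, and \<open>c\<close>
  as a single part, is unique because \<open>v\<close> does not divide \<open>c\<close>; hence \<open>mup n c \<ge> n div v - c\<close>.
  Conversely, in a unique partition every \<open>d < v\<close> divides \<open>c\<close> and so occurs fewer than \<open>c / d\<close>
  times, and parts above \<open>v\<close> are too large to be numerous; so an optimal partition of a large \<open>n\<close>
  contains at least \<open>c\<close> parts equal to \<open>v\<close>. Adding one more part \<open>v\<close> keeps such a partition
  unique, since a new way of making \<open>c\<close> would have to use \<open>c + 1\<close> copies of \<open>v\<close>, and removing a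
  part always keeps uniqueness. This gives \<open>mup (n + v) c \<ge> mup n c + 1\<close> and, applied to an optimal
  partition of \<open>n + v\<close>, the reverse inequality.
\<close>

section \<open>Multisets of natural numbers\<close>

lemma count_add_mset_if_not_subseteq:
  assumes "X \<subseteq># add_mset a M" "\<not> X \<subseteq># M"
  shows "count X a = Suc (count M a)"
proof -
  obtain x where x: "count M x < count X x"
    using assms(2) by (meson not_le subseteq_mset_def)
  moreover have "count X x \<le> count (add_mset a M) x"
    using assms(1) by (simp add: subseteq_mset_def)
  ultimately have "x = a"
    by (metis count_add_mset not_le)
  with x assms(1) show ?thesis
    by (metis count_add_mset le_antisym less_eq_Suc_le mset_subset_eq_count)
qed

lemma count_mult_le_sum_mset: "count M x * x \<le> \<Sum>\<^sub># (M :: nat multiset)"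
  by (induction M) auto

lemma size_mult_le_sum_mset:
  fixes M :: "nat multiset"
  assumes "\<And>x. x \<in># M \<Longrightarrow> a \<le> x"
  shows "size M * a \<le> \<Sum>\<^sub># M"
  using assms by (induction M) (auto intro: add_mono)

lemma size_filter_less_eq_sum_count: "size {#x \<in># M. x < v#} = (\<Sum>d<v. count M d)"
  for M :: "nat multiset"
proof (induction M)
  case (add x M)
  have delta: "(\<Sum>d<v. if d = x then 1 else 0) = (if x < v then 1 else (0::nat))"
    by (simp add: sum.delta)
  have "(\<Sum>d<v. count (add_mset x M) d) = (\<Sum>d<v. count M d + (if d = x then 1 else 0))"
    by (intro sum.cong) auto
  also have "\<dots> = (\<Sum>d<v. count M d) + (if x < v then 1 else 0)"
    by (simp add: sum.distrib delta)
  finally show ?case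
    using add.IH by simp
qed simp

lemma subseteq_replicate_mset_eq:
  assumes "X \<subseteq># replicate_mset k v"
  shows "X = replicate_mset (count X v) v"
proof (rule multiset_eqI)
  fix x
  show "count X x = count (replicate_mset (count X v) v) x"
    using mset_subset_eq_count[OF assms, of x] by auto
qed

text \<open>Parts above \<open>v\<close> are at least \<open>v + 1\<close>, so only boundedly many of them fit into a multiset
  with about \<open>\<Sum>\<^sub># P / v\<close> parts; if the parts below \<open>v\<close> are few as well, the rest equal \<open>v\<close>.\<close>

lemma sum_mset_div_le_count:
  fixes P :: "nat multiset"
  assumes "0 < v" and small: "size {#x \<in># P. x < v#} \<le> s" and long: "\<Sum>\<^sub># P div v \<le> size P + t"
  shows "\<Sum>\<^sub># P div v \<le> count P v + (v + 1) * (s + t) + v"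
proof -
  define L G where "L = {#x \<in># P. x < v#}" and "G = {#x \<in># P. v < x#}"
  define E q where "E = count P v" and "q = \<Sum>\<^sub># P div v"
  have P: "P = L + replicate_mset E v + G"
    unfolding L_def G_def E_def by (auto simp: multiset_eq_iff)
  have "size G * (v + 1) \<le> \<Sum>\<^sub># G"
    by (rule size_mult_le_sum_mset) (simp add: G_def)
  then have "v * E + v * size G + size G \<le> \<Sum>\<^sub># P"
    by (subst P) (simp add: algebra_simps)
  moreover have "\<Sum>\<^sub># P < v * q + v"
  proof -
    have "\<Sum>\<^sub># P = v * q + \<Sum>\<^sub># P mod v"
      by (simp add: q_def)
    moreover have "\<Sum>\<^sub># P mod v < v"
      using \<open>0 < v\<close> by simp
    ultimately show ?thesis
      by linarith
  qed
  moreover have "q \<le> E + size G + (s + t)"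
    using long small by (subst (asm) P) (simp add: q_def L_def)
  then have "v * q \<le> v * E + v * size G + v * (s + t)"
    by (metis mult_le_mono2 distrib_left)
  ultimately have "size G < v * (s + t) + v"
    by linarith
  with \<open>q \<le> E + size G + (s + t)\<close> show ?thesis
    unfolding q_def E_def by (simp add: algebra_simps)
qed

section \<open>Parts of a list as sub-multisets\<close>

lemma image_mset_nth_lessThan: "image_mset ((!) L) (mset_set {..<length L}) = mset L"
  by (metis atLeast0LessThan map_nth mset_map mset_upt)

lemma subseteq_mset_iff_image_nth:
  "X \<subseteq># mset L \<longleftrightarrow> (\<exists>I \<subseteq> {..<length L}. X = image_mset ((!) L) (mset_set I))"
proof
  show "X \<subseteq># mset L" if "\<exists>I \<subseteq> {..<length L}. X = image_mset ((!) L) (mset_set I)"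
    using that by (metis image_mset_nth_lessThan image_mset_subseteq_mono finite_lessThan
        finite_subset msubset_mset_set_iff)
next
  show "X \<subseteq># mset L \<Longrightarrow> \<exists>I \<subseteq> {..<length L}. X = image_mset ((!) L) (mset_set I)"
  proof (induction L arbitrary: X)
    case Nil
    then show ?case
      by auto
  next
    case (Cons a L)
    show ?case
    proof (cases "a \<in># X")
      case True
      then have "X - {#a#} \<subseteq># mset L"
        using Cons.prems by (metis mset.simps(2) subset_eq_diff_conv add_mset_add_single)
      then obtain I where I: "I \<subseteq> {..<length L}" "X - {#a#} = image_mset ((!) L) (mset_set I)"
        using Cons.IH by blast
      have "image_mset ((!) (a # L)) (mset_set (insert 0 (Suc ` I))) = add_mset a (X - {#a#})"
        using I finite_subset[OF I(1)]
        by (simp add: image_mset_mset_set[symmetric] multiset.map_comp comp_def)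
      with True I(1) show ?thesis
        by (intro exI[of _ "insert 0 (Suc ` I)"]) auto
    next
      case False
      then have "X \<subseteq># mset L"
        using count_add_mset_if_not_subseteq[of X a "mset L"] Cons.prems by (auto simp: not_in_iff)
      then obtain I where I: "I \<subseteq> {..<length L}" "X = image_mset ((!) L) (mset_set I)"
        using Cons.IH by blast
      have "image_mset ((!) (a # L)) (mset_set (Suc ` I)) = X"
        using I finite_subset[OF I(1)]
        by (simp add: image_mset_mset_set[symmetric] multiset.map_comp comp_def)
      with I(1) show ?thesis
        by (intro exI[of _ "Suc ` I"]) auto
    qed
  qed
qed

lemma all_subseteq_mset_iff_all_index_sets:
  "(\<forall>X. X \<subseteq># mset L \<longrightarrow> P X) \<longleftrightarrow> (\<forall>I \<subseteq> {..<length L}. P (image_mset ((!) L) (mset_set I)))"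
  unfolding subseteq_mset_iff_image_nth by blast

lemma image_mset_nth_eq_mset_iff:
  assumes "I \<subseteq> {..<length L}"
  shows "image_mset ((!) L) (mset_set I) = mset L \<longleftrightarrow> I = {..<length L}"
proof
  assume "image_mset ((!) L) (mset_set I) = mset L"
  then have "card I = card {..<length L}"
    using finite_subset[OF assms] by (metis card_lessThan size_image_mset size_mset size_mset_set)
  then show "I = {..<length L}"
    using assms by (simp add: card_subset_eq)
qed (simp add: image_mset_nth_lessThan)

lemma all_subsets_lessThan_add_iff:
  fixes a b :: nat
  shows "(\<forall>S \<subseteq> {..<a + b}. P S) \<longleftrightarrow> (\<forall>I \<subseteq> {..<a}. \<forall>J \<subseteq> {..<b}. P (I \<union> (+) a ` J))"
proof
  assume "\<forall>I \<subseteq> {..<a}. \<forall>J \<subseteq> {..<b}. P (I \<union> (+) a ` J)"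
  moreover have "S = (S \<inter> {..<a}) \<union> (+) a ` {j. a + j \<in> S}" "{j. a + j \<in> S} \<subseteq> {..<b}"
    if "S \<subseteq> {..<a + b}" for S
  proof -
    have "x \<in> (+) a ` {j. a + j \<in> S}" if "x \<in> S" "\<not> x < a" for x
      using that by (intro image_eqI[of _ _ "x - a"]) auto
    then show "S = (S \<inter> {..<a}) \<union> (+) a ` {j. a + j \<in> S}"
      by auto
    show "{j. a + j \<in> S} \<subseteq> {..<b}"
      using that by auto
  qed
  ultimately show "\<forall>S \<subseteq> {..<a + b}. P S"
    by (metis Int_lower2)
next
  assume "\<forall>S \<subseteq> {..<a + b}. P S"
  moreover have "I \<union> (+) a ` J \<subseteq> {..<a + b}" if "I \<subseteq> {..<a}" "J \<subseteq> {..<b}" for I J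
    using that by auto
  ultimately show "\<forall>I \<subseteq> {..<a}. \<forall>J \<subseteq> {..<b}. P (I \<union> (+) a ` J)"
    by blast
qed

lemma sum_nth_append_split:
  assumes "I \<subseteq> {..<length xs}" "finite J"
  shows "(\<Sum>i \<in> I \<union> (+) (length xs) ` J. (xs @ ys) ! i) = (\<Sum>i\<in>I. xs ! i) + (\<Sum>j\<in>J. ys ! j)"
proof -
  have "finite I" "I \<inter> (+) (length xs) ` J = {}"
    using assms(1) finite_subset by auto
  then have "(\<Sum>i \<in> I \<union> (+) (length xs) ` J. (xs @ ys) ! i)
      = (\<Sum>i\<in>I. (xs @ ys) ! i) + (\<Sum>j\<in>J. (xs @ ys) ! (length xs + j))"
    using assms(2) by (simp add: sum.union_disjoint sum.reindex)
  also have "\<dots> = (\<Sum>i\<in>I. xs ! i) + (\<Sum>j\<in>J. ys ! j)"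
    using assms(1) by (intro arg_cong2[where f = "(+)"] sum.cong) (auto simp: nth_append)
  finally show ?thesis .
qed

lemma union_shifted_eq_lessThan_iff:
  fixes a b :: nat
  assumes "I \<subseteq> {..<a}" "J \<subseteq> {..<b}"
  shows "I \<union> (+) a ` J = {..<a} \<longleftrightarrow> I = {..<a} \<and> J = {}"
    and "I \<union> (+) a ` J = {a..<a + b} \<longleftrightarrow> I = {} \<and> J = {..<b}"
proof -
  have shift: "(+) a ` {..<b} = {a..<a + b}"
    by (simp add: lessThan_atLeast0 add.commute)
  show "I \<union> (+) a ` J = {..<a} \<longleftrightarrow> I = {..<a} \<and> J = {}"
  proof
    assume eq: "I \<union> (+) a ` J = {..<a}"
    have "J = {}"
    proof (rule ccontr)
      assume "J \<noteq> {}"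
      then obtain j where "a + j \<in> {..<a}"
        using eq by blast
      then show False
        by simp
    qed
    then show "I = {..<a} \<and> J = {}"
      using eq by simp
  qed simp
  show "I \<union> (+) a ` J = {a..<a + b} \<longleftrightarrow> I = {} \<and> J = {..<b}"
  proof
    assume eq: "I \<union> (+) a ` J = {a..<a + b}"
    have "I \<subseteq> {..<a} \<inter> {a..<a + b}"
      using eq assms(1) by blast
    also have "\<dots> = {}"
      by auto
    finally have "I = {}"
      by blast
    then have "(+) a ` J = (+) a ` {..<b}"
      using eq shift by simp
    then show "I = {} \<and> J = {..<b}"
      using \<open>I = {}\<close> by (simp add: inj_image_eq_iff)
  qed (use shift in simp)
qed

lemma unique_partition_iff_sub_msets:
  "unique_partition A B xs ys \<longleftrightarrow>
     0 \<notin># mset xs \<and> 0 \<notin># mset ys \<and> sum_list xs = A \<and> sum_list ys = B \<and>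
     (\<forall>X. X \<subseteq># mset xs \<longrightarrow> (\<forall>Y. Y \<subseteq># mset ys \<longrightarrow>
        (\<Sum>\<^sub># X + \<Sum>\<^sub># Y = A \<longleftrightarrow> X = mset xs \<and> Y = {#} \<or> A = B \<and> X = {#} \<and> Y = mset ys)))"
proof -
  let ?a = "length xs" and ?b = "length ys"
  let ?img = "\<lambda>L I. image_mset ((!) L) (mset_set I)"
  have "(\<forall>S \<subseteq> {..<?a + ?b}. (\<Sum>i\<in>S. (xs @ ys) ! i) = A \<longleftrightarrow>
           S = {..<?a} \<or> A = B \<and> S = {?a..<?a + ?b})
    \<longleftrightarrow> (\<forall>I \<subseteq> {..<?a}. \<forall>J \<subseteq> {..<?b}. \<Sum>\<^sub># (?img xs I) + \<Sum>\<^sub># (?img ys J) = A \<longleftrightarrow>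
           ?img xs I = mset xs \<and> ?img ys J = {#} \<or> A = B \<and> ?img xs I = {#} \<and> ?img ys J = mset ys)"
    (is "?indices \<longleftrightarrow> _")
    unfolding all_subsets_lessThan_add_iff
  proof (intro all_cong1 imp_cong refl)
    fix I J assume I: "I \<subseteq> {..<?a}" and J: "J \<subseteq> {..<?b}"
    then have "finite I" "finite J"
      using finite_subset by blast+
    have sum_split: "(\<Sum>i \<in> I \<union> (+) ?a ` J. (xs @ ys) ! i) = \<Sum>\<^sub># (?img xs I) + \<Sum>\<^sub># (?img ys J)"
      unfolding sum_unfold_sum_mset[symmetric] by (rule sum_nth_append_split[OF I \<open>finite J\<close>])
    have empty: "?img L K = {#} \<longleftrightarrow> K = {}" if "finite K" for L :: "nat list" and K
      using that by (simp add: mset_set_empty_iff)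
    show "((\<Sum>i \<in> I \<union> (+) ?a ` J. (xs @ ys) ! i) = A \<longleftrightarrow>
           I \<union> (+) ?a ` J = {..<?a} \<or> A = B \<and> I \<union> (+) ?a ` J = {?a..<?a + ?b})
      \<longleftrightarrow> (\<Sum>\<^sub># (?img xs I) + \<Sum>\<^sub># (?img ys J) = A \<longleftrightarrow>
           ?img xs I = mset xs \<and> ?img ys J = {#} \<or> A = B \<and> ?img xs I = {#} \<and> ?img ys J = mset ys)"
      unfolding sum_split union_shifted_eq_lessThan_iff[OF I J] image_mset_nth_eq_mset_iff[OF I]
        image_mset_nth_eq_mset_iff[OF J] empty[OF \<open>finite I\<close>] empty[OF \<open>finite J\<close>] by (rule refl)
  qed
  also have "\<dots> \<longleftrightarrow> (\<forall>X. X \<subseteq># mset xs \<longrightarrow> (\<forall>Y. Y \<subseteq># mset ys \<longrightarrow>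
        (\<Sum>\<^sub># X + \<Sum>\<^sub># Y = A \<longleftrightarrow> X = mset xs \<and> Y = {#} \<or> A = B \<and> X = {#} \<and> Y = mset ys)))"
    (is "_ \<longleftrightarrow> ?sub_msets")
    by (simp only: all_subseteq_mset_iff_all_index_sets)
  finally have indices_iff: "?indices \<longleftrightarrow> ?sub_msets" .
  have "(\<forall>x\<in>set zs. 0 < x) \<longleftrightarrow> 0 \<notin># mset zs" for zs :: "nat list"
    by (auto intro: gr0I)
  then show ?thesis
    unfolding unique_partition_def indices_iff by (simp only:)
qed

lemma sub_msets_sum_complement:
  fixes P Q X\<^sub>0 Y\<^sub>0 :: "nat multiset"
  assumes "X\<^sub>0 \<subseteq># P" "Y\<^sub>0 \<subseteq># Q"
    and "\<forall>X. X \<subseteq># P \<longrightarrow> (\<forall>Y. Y \<subseteq># Q \<longrightarrow>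
           \<Sum>\<^sub># X + \<Sum>\<^sub># Y = \<Sum>\<^sub># X\<^sub>0 + \<Sum>\<^sub># Y\<^sub>0 \<longrightarrow> X = X\<^sub>0 \<and> Y = Y\<^sub>0)"
  shows "\<forall>X. X \<subseteq># P \<longrightarrow> (\<forall>Y. Y \<subseteq># Q \<longrightarrow>
           \<Sum>\<^sub># X + \<Sum>\<^sub># Y = \<Sum>\<^sub># (P - X\<^sub>0) + \<Sum>\<^sub># (Q - Y\<^sub>0) \<longrightarrow> X = P - X\<^sub>0 \<and> Y = Q - Y\<^sub>0)"
proof (intro allI impI)
  fix X Y
  assume X: "X \<subseteq># P" and Y: "Y \<subseteq># Q"
    and sum: "\<Sum>\<^sub># X + \<Sum>\<^sub># Y = \<Sum>\<^sub># (P - X\<^sub>0) + \<Sum>\<^sub># (Q - Y\<^sub>0)"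
  obtain X' Y' where P: "P = X + X'" and Q: "Q = Y + Y'"
    using X Y by (meson mset_subset_eq_exists_conv)
  have split: "\<Sum>\<^sub># M = \<Sum>\<^sub># N + \<Sum>\<^sub># (M - N)" if "N \<subseteq># M" for M N :: "nat multiset"
    using that by (metis subset_mset.add_diff_inverse sum_mset.union)
  have "\<Sum>\<^sub># X' + \<Sum>\<^sub># Y' = \<Sum>\<^sub># X\<^sub>0 + \<Sum>\<^sub># Y\<^sub>0"
    using sum P Q split[OF assms(1)] split[OF assms(2)] by simp
  moreover have "X' \<subseteq># P" "Y' \<subseteq># Q"
    using P Q by simp_all
  ultimately have "X' = X\<^sub>0 \<and> Y' = Y\<^sub>0"
    using assms(3) by blast
  then show "X = P - X\<^sub>0 \<and> Y = Q - Y\<^sub>0"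
    using P Q by simp
qed

section \<open>Unique partitions as multisets\<close>

text \<open>For \<open>\<Sum>\<^sub># P \<noteq> \<Sum>\<^sub># Q\<close> this is \<^const>\<open>unique_partition\<close> up to the order of the parts, stated on the
  side of \<open>Q\<close>: the only way to make \<open>\<Sum>\<^sub># Q\<close> from the parts is to take exactly \<open>Q\<close>.\<close>

definition unique_partition_mset :: "nat multiset \<Rightarrow> nat multiset \<Rightarrow> bool" where
  "unique_partition_mset P Q \<longleftrightarrow> 0 \<notin># P \<and> 0 \<notin># Q \<and>
     (\<forall>X. X \<subseteq># P \<longrightarrow> (\<forall>Y. Y \<subseteq># Q \<longrightarrow> \<Sum>\<^sub># X + \<Sum>\<^sub># Y = \<Sum>\<^sub># Q \<longrightarrow> X = {#} \<and> Y = Q))"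

lemma unique_partition_iff_unique_partition_mset:
  assumes "A \<noteq> B"
  shows "unique_partition A B xs ys \<longleftrightarrow>
    sum_list xs = A \<and> sum_list ys = B \<and> unique_partition_mset (mset xs) (mset ys)"
proof -
  let ?P = "mset xs" and ?Q = "mset ys"
  have complement: "(\<forall>X. X \<subseteq># ?P \<longrightarrow> (\<forall>Y. Y \<subseteq># ?Q \<longrightarrow>
      \<Sum>\<^sub># X + \<Sum>\<^sub># Y = \<Sum>\<^sub># ?P \<longrightarrow> X = ?P \<and> Y = {#}))
    \<longleftrightarrow> (\<forall>X. X \<subseteq># ?P \<longrightarrow> (\<forall>Y. Y \<subseteq># ?Q \<longrightarrow>
      \<Sum>\<^sub># X + \<Sum>\<^sub># Y = \<Sum>\<^sub># ?Q \<longrightarrow> X = {#} \<and> Y = ?Q))" (is "?L \<longleftrightarrow> ?R")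
  proof
    show ?R if ?L
      using sub_msets_sum_complement[of ?P ?P "{#}" ?Q] that by simp
    show ?L if ?R
      using sub_msets_sum_complement[of "{#}" ?P ?Q ?Q] that by simp
  qed
  show ?thesis
  proof (cases "sum_list xs = A \<and> sum_list ys = B")
    case True
    then have "\<Sum>\<^sub># ?P = A"
      by (simp add: sum_mset_sum_list)
    with assms have "(\<forall>X. X \<subseteq># ?P \<longrightarrow> (\<forall>Y. Y \<subseteq># ?Q \<longrightarrow>
        (\<Sum>\<^sub># X + \<Sum>\<^sub># Y = A \<longleftrightarrow> X = ?P \<and> Y = {#} \<or> A = B \<and> X = {#} \<and> Y = ?Q)))
      \<longleftrightarrow> (\<forall>X. X \<subseteq># ?P \<longrightarrow> (\<forall>Y. Y \<subseteq># ?Q \<longrightarrow>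
        \<Sum>\<^sub># X + \<Sum>\<^sub># Y = \<Sum>\<^sub># ?P \<longrightarrow> X = ?P \<and> Y = {#}))"
      by auto
    with True show ?thesis
      unfolding unique_partition_iff_sub_msets unique_partition_mset_def complement
      by (simp only: simp_thms)
  next
    case False
    then show ?thesis
      unfolding unique_partition_iff_sub_msets by blast
  qed
qed

lemma unique_partition_mset_mono:
  assumes "unique_partition_mset P Q" "P' \<subseteq># P"
  shows "unique_partition_mset P' Q"
proof -
  have "0 \<notin># P'"
    using assms by (auto simp: unique_partition_mset_def dest: mset_subset_eqD)
  moreover have "X \<subseteq># P" if "X \<subseteq># P'" for X
    using that assms(2) by (rule subset_mset.order_trans)
  ultimately show ?thesis
    using assms(1) unfolding unique_partition_mset_def by blast
qed

lemma unique_partition_mset_add_mset: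
  assumes up: "unique_partition_mset P Q" and large: "\<Sum>\<^sub># Q < Suc (count P v) * v"
  shows "unique_partition_mset (add_mset v P) Q"
proof -
  have "X = {#} \<and> Y = Q"
    if X: "X \<subseteq># add_mset v P" and Y: "Y \<subseteq># Q" and sum: "\<Sum>\<^sub># X + \<Sum>\<^sub># Y = \<Sum>\<^sub># Q" for X Y
  proof (cases "X \<subseteq># P")
    case True
    with up Y sum show ?thesis
      unfolding unique_partition_mset_def by blast
  next
    case False
    \<comment> \<open>then X contains every copy of v, the new one included\<close>
    then have "Suc (count P v) * v \<le> \<Sum>\<^sub># X"
      using count_add_mset_if_not_subseteq[OF X] count_mult_le_sum_mset[of X v] by simp
    with large sum show ?thesis
      by linarith
  qed
  moreover have "v \<noteq> 0"
    using large by (metis mult_0_right not_less0)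
  ultimately show ?thesis
    using up unfolding unique_partition_mset_def by auto
qed

lemma unique_partition_mset_count_less:
  assumes up: "unique_partition_mset P Q" and "0 < d" "d dvd \<Sum>\<^sub># Q" "0 < \<Sum>\<^sub># Q"
  shows "d * count P d < \<Sum>\<^sub># Q"
proof (rule ccontr)
  assume "\<not> d * count P d < \<Sum>\<^sub># Q"
  define k where "k = \<Sum>\<^sub># Q div d"
  have sum: "k * d = \<Sum>\<^sub># Q"
    using assms(3) by (simp add: k_def)
  then have "k \<le> count P d"
    using \<open>\<not> d * count P d < \<Sum>\<^sub># Q\<close> \<open>0 < d\<close> by (metis mult.commute mult_le_cancel1 not_less)
  then have "replicate_mset k d \<subseteq># P"
    by (simp add: count_le_replicate_mset_subset_eq)
  moreover have "{#} \<subseteq># Q" "\<Sum>\<^sub># (replicate_mset k d) + \<Sum>\<^sub># {#} = \<Sum>\<^sub># Q"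
    using sum by simp_all
  ultimately have "replicate_mset k d = {#}"
    using up unfolding unique_partition_mset_def by blast
  moreover have "k \<noteq> 0"
    using sum assms(4) by (metis less_irrefl mult_is_0)
  ultimately show False
    by simp
qed

lemma unique_partition_mset_size_small_parts:
  assumes up: "unique_partition_mset P Q" and "0 < \<Sum>\<^sub># Q"
    and small_dvd: "\<And>d. 0 < d \<Longrightarrow> d < v \<Longrightarrow> d dvd \<Sum>\<^sub># Q"
  shows "size {#x \<in># P. x < v#} \<le> v * \<Sum>\<^sub># Q"
proof -
  have "count P d \<le> \<Sum>\<^sub># Q" if "d < v" for d
  proof (cases "d = 0")
    case True
    then show ?thesis
      using up by (simp add: unique_partition_mset_def not_in_iff)
  next
    case False
    then have "d * count P d < \<Sum>\<^sub># Q"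
      using unique_partition_mset_count_less[OF up _ small_dvd] that assms(2) by simp
    moreover have "count P d \<le> d * count P d"
      using False by simp
    ultimately show ?thesis
      by linarith
  qed
  then have "(\<Sum>d<v. count P d) \<le> (\<Sum>d<v. \<Sum>\<^sub># Q)"
    by (intro sum_mono) simp
  then show ?thesis
    by (simp add: size_filter_less_eq_sum_count)
qed

lemma unique_partition_mset_witness:
  assumes "0 < v" "\<not> v dvd c" "c < b"
  shows "unique_partition_mset (add_mset b (replicate_mset k v)) {#c#}"
proof -
  have "X = {#} \<and> Y = {#c#}"
    if X: "X \<subseteq># add_mset b (replicate_mset k v)" and Y: "Y \<subseteq># {#c#}"
      and sum: "\<Sum>\<^sub># X + \<Sum>\<^sub># Y = \<Sum>\<^sub># {#c#}" for X Y
  proof -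
    have "X \<subseteq># replicate_mset k v"
    proof (rule ccontr)
      assume "\<not> X \<subseteq># replicate_mset k v"
      then have "1 \<le> count X b"
        using count_add_mset_if_not_subseteq[OF X] by simp
      then have "b \<le> count X b * b"
        using mult_le_mono1[of 1 "count X b" b] by simp
      then have "b \<le> \<Sum>\<^sub># X"
        using count_mult_le_sum_mset[of X b] by linarith
      with sum assms(3) show False
        by simp
    qed
    then have X_eq: "X = replicate_mset (count X v) v"
      by (rule subseteq_replicate_mset_eq)
    have sum_X: "\<Sum>\<^sub># X = count X v * v"
      by (subst (1) X_eq) simp
    consider "Y = {#}" | "Y = {#c#}"
      using Y by (metis nonempty_subseteq_mset_eq_single)
    then show ?thesis
    proof cases
      case 1
      then have "count X v * v = c"
        using sum sum_X by simp
      with assms(2) show ?thesis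
        by (metis dvd_triv_right)
    next
      case 2
      then have "count X v = 0"
        using sum sum_X assms(1) by simp
      with X_eq 2 show ?thesis
        by simp
    qed
  qed
  moreover have "c \<noteq> 0"
    using assms(2) by (metis dvd_0_right)
  ultimately show ?thesis
    using assms unfolding unique_partition_mset_def by auto
qed

section \<open>Maximal unique partitions\<close>

lemma length_le_sum_list: "(\<forall>x\<in>set xs. 0 < x) \<Longrightarrow> length xs \<le> sum_list xs"
  for xs :: "nat list"
  by (induction xs) auto

lemma finite_unique_partition_lengths:
  "finite {length xs + length ys | xs ys. unique_partition A B xs ys}"
proof (rule finite_subset)
  show "{length xs + length ys | xs ys. unique_partition A B xs ys} \<subseteq> {..A + B}"
  proof
    fix k
    assume "k \<in> {length xs + length ys | xs ys. unique_partition A B xs ys}"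
    then obtain xs ys where "k = length xs + length ys" "unique_partition A B xs ys"
      by blast
    then show "k \<in> {..A + B}"
      using length_le_sum_list[of xs] length_le_sum_list[of ys] by (auto simp: unique_partition_def)
  qed
qed simp

lemma length_le_mup:
  assumes "unique_partition A B xs ys"
  shows "length xs + length ys \<le> mup A B"
  unfolding mup_def using assms finite_unique_partition_lengths by (blast intro: Max_ge)

lemma obtain_optimal_partition:
  assumes "unique_partition A B xs ys"
  obtains xs' ys' where "unique_partition A B xs' ys'" "length xs' + length ys' = mup A B"
proof -
  have "mup A B \<in> {length xs + length ys | xs ys. unique_partition A B xs ys}"
    unfolding mup_def using assms finite_unique_partition_lengths by (intro Max_in) blast+
  then obtain xs' ys' where "unique_partition A B xs' ys'" "length xs' + length ys' = mup A B"
    by auto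
  then show ?thesis
    by (rule that)
qed

lemma unique_partition_Cons:
  assumes "unique_partition n c xs ys" "c \<le> count (mset xs) v" "0 < v" "n \<noteq> c" "n + v \<noteq> c"
  shows "unique_partition (n + v) c (v # xs) ys"
proof -
  have "Suc (count (mset xs) v) \<le> Suc (count (mset xs) v) * v"
    using mult_le_mono2[of 1 v "Suc (count (mset xs) v)"] assms(3) by simp
  then have "c < Suc (count (mset xs) v) * v"
    using assms(2) by linarith
  then show ?thesis
    using assms unique_partition_mset_add_mset[of "mset xs" "mset ys" v]
    by (simp add: unique_partition_iff_unique_partition_mset sum_mset_sum_list)
qed

lemma unique_partition_remove1:
  assumes "unique_partition (n + v) c xs ys" "v \<in> set xs" "n \<noteq> c" "n + v \<noteq> c"
  shows "unique_partition n c (remove1 v xs) ys"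
  using assms unique_partition_mset_mono[of "mset xs" "mset ys" "mset xs - {#v#}"]
    sum_list_map_remove1[of v xs id]
  by (simp add: unique_partition_iff_unique_partition_mset)

lemma unique_partition_witness:
  assumes "0 < v" "\<not> v dvd c" "(c + 1) * v \<le> n"
  shows "unique_partition n c (((c + 1) * v + n mod v) # replicate (n div v - (c + 1)) v) [c]"
proof -
  have "c + 1 \<le> n div v"
    using assms by (simp add: less_eq_div_iff_mult_less_eq)
  then have "(c + 1) * v \<le> n div v * v"
    by (rule mult_le_mono1)
  moreover have "(n div v - (c + 1)) * v = n div v * v - (c + 1) * v"
    by (rule diff_mult_distrib)
  moreover have "n div v * v + n mod v = n"
    by (rule div_mult_mod_eq)
  ultimately have "sum_list (((c + 1) * v + n mod v) # replicate (n div v - (c + 1)) v) = n"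
    by (simp add: sum_list_replicate)
  moreover have "c + 1 \<le> (c + 1) * v"
    using assms(1) by (metis mult_le_mono2 mult.right_neutral Suc_leI One_nat_def)
  then have "c < (c + 1) * v + n mod v"
    by linarith
  moreover have "n \<noteq> c"
    using \<open>c + 1 \<le> (c + 1) * v\<close> assms(3) by linarith
  ultimately show ?thesis
    using unique_partition_mset_witness[OF assms(1,2)]
    by (simp add: unique_partition_iff_unique_partition_mset)
qed

text \<open>The threshold comes from \<open>sum_mset_div_le_count\<close> with \<open>s = v * c\<close> for the parts below \<open>v\<close>
  and \<open>t = 2 * c\<close> for the slack in \<open>n div v \<le> mup n c + c\<close> and the at most \<open>c\<close> parts of \<open>ys\<close>.\<close>

lemma obtain_optimal_partition_many_parts:
  assumes "0 < c" "0 < v" "\<not> v dvd c" "\<And>d. 0 < d \<Longrightarrow> d < v \<Longrightarrow> d dvd c"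
    and large: "(v + 1) * (v * c + 2 * c) + v + c \<le> n div v"
  obtains xs ys where "unique_partition n c xs ys" "length xs + length ys = mup n c"
    "c \<le> count (mset xs) v"
proof -
  have "c + 1 \<le> n div v"
    using large assms(2) by linarith
  then have "(c + 1) * v \<le> n"
    using assms(2) by (simp add: less_eq_div_iff_mult_less_eq)
  note witness = unique_partition_witness[OF assms(2,3) this]
  obtain xs ys where up: "unique_partition n c xs ys" and opt: "length xs + length ys = mup n c"
    using obtain_optimal_partition[OF witness] by blast
  have "n \<noteq> c"
    using \<open>c + 1 \<le> n div v\<close> div_le_dividend[of n v] by linarith
  then have sums: "\<Sum>\<^sub># (mset xs) = n" "\<Sum>\<^sub># (mset ys) = c"
    and upm: "unique_partition_mset (mset xs) (mset ys)"
    using up by (simp_all add: unique_partition_iff_unique_partition_mset sum_mset_sum_list)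
  have "length ys \<le> c"
    using up length_le_sum_list[of ys] by (simp add: unique_partition_def)
  have "n div v \<le> length xs + length ys + c"
    using length_le_mup[OF witness] opt by simp
  then have long: "\<Sum>\<^sub># (mset xs) div v \<le> size (mset xs) + 2 * c"
    using sums \<open>length ys \<le> c\<close> by simp
  have small: "size {#x \<in># mset xs. x < v#} \<le> v * c"
    using unique_partition_mset_size_small_parts[OF upm] sums assms(1,4) by simp
  have "n div v \<le> count (mset xs) v + (v + 1) * (v * c + 2 * c) + v"
    using sum_mset_div_le_count[OF assms(2) small long] sums by simp
  with large have "c \<le> count (mset xs) v"
    by linarith
  with up opt show ?thesis
    by (rule that)
qed

lemma mup_add_least_non_divisor:
  assumes "0 < c" "0 < v" "\<not> v dvd c" "\<And>d. 0 < d \<Longrightarrow> d < v \<Longrightarrow> d dvd c"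
    and large: "(v + 1) * (v * c + 2 * c) + v + c \<le> n div v"
  shows "mup (n + v) c = mup n c + 1"
proof -
  have "n div v \<le> (n + v) div v"
    by (simp add: div_le_mono)
  with large have large': "(v + 1) * (v * c + 2 * c) + v + c \<le> (n + v) div v"
    by linarith
  obtain xs ys where
    up: "unique_partition n c xs ys" "length xs + length ys = mup n c" "c \<le> count (mset xs) v"
    by (rule obtain_optimal_partition_many_parts[OF assms])
  obtain xs' ys' where
    up': "unique_partition (n + v) c xs' ys'" "length xs' + length ys' = mup (n + v) c"
      "c \<le> count (mset xs') v"
    by (rule obtain_optimal_partition_many_parts[OF assms(1-4) large'])
  have "c < n"
    using large div_le_dividend[of n v] assms(2) by linarith
  then have ne: "n \<noteq> c" "n + v \<noteq> c"
    by simp_all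
  have "mup n c + 1 \<le> mup (n + v) c"
    using length_le_mup[OF unique_partition_Cons[OF up(1,3) assms(2) ne]] up(2) by simp
  moreover have "0 < count (mset xs') v"
    using up'(3) assms(1) by linarith
  then have "mup (n + v) c \<le> mup n c + 1"
    using length_le_mup[OF unique_partition_remove1[OF up'(1) _ ne]] up'(2)
    by (simp add: length_remove1)
  ultimately show ?thesis
    by simp
qed

lemma least_non_divisor:
  fixes c :: nat
  assumes "0 < c"
  defines "v \<equiv> LEAST k. 0 < k \<and> \<not> k dvd c"
  shows "0 < v" "\<not> v dvd c" "\<And>d. 0 < d \<Longrightarrow> d < v \<Longrightarrow> d dvd c"
proof -
  have "0 < c + 1 \<and> \<not> (c + 1) dvd c"
    using assms(1) by (auto dest: dvd_imp_le)
  then have "0 < v \<and> \<not> v dvd c"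
    unfolding v_def by (rule LeastI)
  then show "0 < v" "\<not> v dvd c"
    by auto
  show "d dvd c" if "0 < d" "d < v" for d
    using not_less_Least[of d "\<lambda>k. 0 < k \<and> \<not> k dvd c"] that unfolding v_def by blast
qed

theorem proposition3p3:
  fixes c :: nat
  assumes "0 < c"
  shows "\<exists>N::nat. \<forall>n::nat. n > N \<longrightarrow>
           mup (n + (LEAST k::nat. 0 < k \<and> \<not> k dvd c)) c = mup n c + 1"
proof -
  define v where "v = (LEAST k::nat. 0 < k \<and> \<not> k dvd c)"
  note v = least_non_divisor[OF assms, folded v_def]
  define K where "K = (v + 1) * (v * c + 2 * c) + v + c"
  have "mup (n + v) c = mup n c + 1" if "v * K < n" for n
  proof -
    have "K \<le> n div v"
      using that v(1) by (simp add: less_eq_div_iff_mult_less_eq mult.commute)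
    then show ?thesis
      using mup_add_least_non_divisor[OF assms v(1,2)] v(3) unfolding K_def by blast
  qed
  then show ?thesis
    unfolding v_def by blast
qed

end
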